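(* Let $n\ge 3$ and $x\in S_n$ avoid $132$. Then there exists $1\le i\le n-2$ with $|\mathrm{Act}_i(x;132)|=|\mathrm{Act}_{i+1}(x;132)|\le|\mathrm{Act}_{i+2}(x;132)|$ if and only if $x$ contains the bivincular pattern $123^{\star}$.
   Context: For $w=w_1\cdots w_{m}\in S_{m}$ and $1\le i\le m+1$, let $w^i$ be the permutation obtained by inserting $m+1$ immediately before $w_i$ (at the end if $i=m+1$). For a pattern $y$, site $i$ of $w$ is active with respect to $y$ if $w^i$ avoids $y$ (has no subsequence order-isomorphic to $y$). For $x\in S_n$ and $1\le k\le n$, let $\mathrm{small}_k(x)$ be the subsequence of $x$ formed by the entries $1,\dots,k$ (a permutation in $S_k$). For $1\le j\le n$, $\mathrm{Act}_j(x;y)$ is the set of active sites of $\mathrm{small}_{n+1-j}(x)$ with respect to $y$. An occurrence of the bivincular pattern $123^{\star}$ in $x$ is a pair of indices $a<b<n$ with $x_a<x_b$ and $x_{b+1}=x_b+1$. *)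

theory Defs
  imports Main
begin

definition is_perm :: "nat \<Rightarrow> nat list \<Rightarrow> bool" where
  "is_perm n w \<longleftrightarrow> length w = n \<and> distinct w \<and> set w = {1..n}"

definition order_iso :: "nat list \<Rightarrow> nat list \<Rightarrow> bool" where
  "order_iso u v \<longleftrightarrow> length u = length v \<and>
     (\<forall>i<length u. \<forall>j<length u. (u ! i < u ! j) = (v ! i < v ! j))"

definition contains :: "nat list \<Rightarrow> nat list \<Rightarrow> bool" where
  "contains w y \<longleftrightarrow> (\<exists>I. order_iso (nths w I) y)"

definition avoids :: "nat list \<Rightarrow> nat list \<Rightarrow> bool" where
  "avoids w y \<longleftrightarrow> \<not> contains w y"

text \<open>w^i: insert (length w + 1) immediately before w_i (1-based), at end if i = m+1.\<close>
definition ins_max :: "nat list \<Rightarrow> nat \<Rightarrow> nat list" where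
  "ins_max w i = take (i - 1) w @ [length w + 1] @ drop (i - 1) w"

definition active_sites :: "nat list \<Rightarrow> nat list \<Rightarrow> nat set" where
  "active_sites w y = {i. 1 \<le> i \<and> i \<le> length w + 1 \<and> avoids (ins_max w i) y}"

definition small :: "nat \<Rightarrow> nat list \<Rightarrow> nat list" where
  "small k x = filter (\<lambda>v. v \<le> k) x"

definition Act :: "nat \<Rightarrow> nat list \<Rightarrow> nat list \<Rightarrow> nat set" where
  "Act j x y = active_sites (small (length x + 1 - j) x) y"

text \<open>Bivincular 123*: 1-based indices a < b < n with x_a < x_b and x_{b+1} = x_b + 1
  (here 0-based).\<close>
definition contains_123star :: "nat list \<Rightarrow> bool" where
  "contains_123star x \<longleftrightarrow> (\<exists>a b. a < b \<and> b + 1 < length x \<and> x ! a < x ! b \<and> x ! (b + 1) = x ! b + 1)"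

end

theory Submission
  imports Defs "HOL-Library.Sublist"
begin

text \<open>
  Inserting the maximum k + 1 into a 132-avoiding w with entries 1..k creates a 132 exactly
  when some entry before the insertion point is smaller than some entry after it. Hence the
  active sites of \<open>small\<^sub>k(x)\<close> correspond to the values v \<le> k for which all of
  v+1..k precede all of 1..v in x, and \<open>|Act\<^sub>j| = |G(k)| + 2\<close> for k = n + 1 - j, where
  G(k) = \<open>split_points x k\<close> collects the nontrivial such v (0 < v < k).

  From k - 1 to k, G grows by exactly the new point k - 1 if k precedes all smaller values,
  and otherwise G(k) \<subseteq> G(k - 1). So \<open>|G(k)| = |G(k-1)| \<le> |G(k-2)|\<close> forces both k and
  k - 1 to be preceded by smaller values and G(k) = G(k - 1). By 132-avoidance k - 1 comes
  before k, and an entry strictly between them would either form a 132 or produce a point of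
  G(k - 1) outside G(k); so k immediately follows k - 1, and a smaller entry before k - 1
  completes an occurrence of 123*. Conversely, an occurrence of 123* whose adjacent
  entries are m, m + 1 gives G(m + 1) = G(m) \<subseteq> G(m - 1).
\<close>

section \<open>Relative order of list entries\<close>

definition precedes :: "'a list \<Rightarrow> 'a \<Rightarrow> 'a \<Rightarrow> bool" where
  "precedes w a b \<longleftrightarrow> (\<exists>p q. p < q \<and> q < length w \<and> w ! p = a \<and> w ! q = b)"

lemma precedes_Nil [simp]: "\<not> precedes [] a b"
  by (simp add: precedes_def)

lemma precedes_Cons: "precedes (y # ys) a b \<longleftrightarrow> (y = a \<and> b \<in> set ys) \<or> precedes ys a b"
  unfolding precedes_def in_set_conv_nth
proof (intro iffI; elim disjE exE conjE)
  fix p q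
  assume "p < q" "q < length (y # ys)" "(y # ys) ! p = a" "(y # ys) ! q = b"
  then show "y = a \<and> (\<exists>i<length ys. ys ! i = b) \<or>
      (\<exists>p q. p < q \<and> q < length ys \<and> ys ! p = a \<and> ys ! q = b)"
    by (cases p; cases q) auto
next
  fix i assume "y = a" "i < length ys" "ys ! i = b"
  then show "\<exists>p q. p < q \<and> q < length (y # ys) \<and> (y # ys) ! p = a \<and> (y # ys) ! q = b"
    by (intro exI[of _ 0] exI[of _ "Suc i"]) auto
next
  fix p q assume "p < q" "q < length ys" "ys ! p = a" "ys ! q = b"
  then show "\<exists>p q. p < q \<and> q < length (y # ys) \<and> (y # ys) ! p = a \<and> (y # ys) ! q = b"
    by (intro exI[of _ "Suc p"] exI[of _ "Suc q"]) auto
qed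

lemma precedes_in_set: "precedes w a b \<Longrightarrow> a \<in> set w \<and> b \<in> set w"
  by (induct w) (auto simp: precedes_Cons)

lemma precedes_append:
  "precedes (xs @ ys) a b \<longleftrightarrow> precedes xs a b \<or> (a \<in> set xs \<and> b \<in> set ys) \<or> precedes ys a b"
  by (induct xs) (auto simp: precedes_Cons)

lemma precedes_filter: "P a \<Longrightarrow> P b \<Longrightarrow> precedes (filter P xs) a b \<longleftrightarrow> precedes xs a b"
  by (induct xs) (auto simp: precedes_Cons)

lemma precedes_asym: "distinct w \<Longrightarrow> precedes w a b \<Longrightarrow> \<not> precedes w b a"
  by (induct w) (auto simp: precedes_Cons dest: precedes_in_set)

lemma precedes_trans: "distinct w \<Longrightarrow> precedes w a b \<Longrightarrow> precedes w b c \<Longrightarrow> precedes w a c"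
  by (induct w) (auto simp: precedes_Cons dest: precedes_in_set)

lemma precedes_total:
  "a \<in> set w \<Longrightarrow> b \<in> set w \<Longrightarrow> a \<noteq> b \<Longrightarrow> precedes w a b \<or> precedes w b a"
  by (induct w) (auto simp: precedes_Cons)

lemma precedes_nth_iff:
  assumes "distinct w" "p < length w"
  shows "precedes w (w ! p) b \<longleftrightarrow> (\<exists>q. p < q \<and> q < length w \<and> w ! q = b)"
    and "precedes w b (w ! p) \<longleftrightarrow> (\<exists>q<p. w ! q = b)"
  using assms nth_eq_iff_index_eq[OF assms(1)] unfolding precedes_def
  by (metis order.strict_trans)+

lemma subseq_pair_iff_precedes: "subseq [a, b] w \<longleftrightarrow> precedes w a b"
  by (induct w) (auto simp: precedes_Cons subseq_singleton_left dest: precedes_in_set)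

lemma subseq_triple_iff_precedes:
  "distinct w \<Longrightarrow> subseq [a, b, c] w \<longleftrightarrow> precedes w a b \<and> precedes w b c"
  by (induct w) (auto simp: precedes_Cons subseq_pair_iff_precedes dest: precedes_in_set)

section \<open>Occurrences of 132\<close>

lemma contains_iff_subseq: "contains w y \<longleftrightarrow> (\<exists>s. subseq s w \<and> order_iso s y)"
  by (auto simp: contains_def subseq_conv_nths)

lemma contains_subseq: "subseq u w \<Longrightarrow> contains u y \<Longrightarrow> contains w y"
  unfolding contains_iff_subseq by (meson subseq_order.trans)

lemma order_iso_132_iff: "order_iso s [1, 3, 2] \<longleftrightarrow> (\<exists>a b c. s = [a, b, c] \<and> a < c \<and> c < b)"
proof -
  have iso: "order_iso [a, b, c] [1, 3, 2] \<longleftrightarrow> a < c \<and> c < b" for a b c :: nat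
    by (auto simp: order_iso_def numeral_3_eq_3 All_less_Suc)
  have "\<exists>a b c. s = [a, b, c]" if "order_iso s [1, 3, 2]"
    using that by (auto simp: order_iso_def numeral_3_eq_3 length_Suc_conv)
  then show ?thesis
    using iso by blast
qed

lemma contains_132_iff:
  "distinct w \<Longrightarrow> contains w [1, 3, 2] \<longleftrightarrow> (\<exists>a b c. precedes w a b \<and> precedes w b c \<and> a < c \<and> c < b)"
  unfolding contains_iff_subseq order_iso_132_iff by (blast dest: subseq_triple_iff_precedes)

lemma contains_132_insert_max:
  assumes dist: "distinct (P @ M # S)" and below: "\<forall>v\<in>set (P @ S). v < M"
  shows "contains (P @ M # S) [1, 3, 2] \<longleftrightarrow>
    contains (P @ S) [1, 3, 2] \<or> (\<exists>a\<in>set P. \<exists>c\<in>set S. a < c)"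
proof
  assume "contains (P @ M # S) [1, 3, 2]"
  then obtain a b c where abc: "precedes (P @ M # S) a b" "precedes (P @ M # S) b c" "a < c" "c < b"
    using contains_132_iff[OF dist] by blast
  have "b \<le> M"
    using precedes_in_set[OF abc(1)] below by (auto intro: less_imp_le)
  then have "a \<noteq> M" "c \<noteq> M"
    using abc by auto
  show "contains (P @ S) [1, 3, 2] \<or> (\<exists>a\<in>set P. \<exists>c\<in>set S. a < c)"
  proof (cases "b = M")
    case True
    then have "a \<in> set P" "c \<in> set S"
      using abc(1,2) dist \<open>a \<noteq> M\<close> \<open>c \<noteq> M\<close>
      by (auto simp: precedes_append precedes_Cons dest: precedes_in_set)
    then show ?thesis
      using abc(3) by blast
  next
    case False
    then have "precedes (P @ S) a b" "precedes (P @ S) b c"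
      using abc(1,2) \<open>a \<noteq> M\<close> \<open>c \<noteq> M\<close> by (auto simp: precedes_append precedes_Cons)
    then show ?thesis
      using abc(3,4) contains_132_iff[of "P @ S"] dist by auto
  qed
next
  assume "contains (P @ S) [1, 3, 2] \<or> (\<exists>a\<in>set P. \<exists>c\<in>set S. a < c)"
  then show "contains (P @ M # S) [1, 3, 2]"
  proof
    assume "contains (P @ S) [1, 3, 2]"
    then show ?thesis
      by (rule contains_subseq[rotated]) (simp add: subseq_append' list_emb_Cons)
  next
    assume "\<exists>a\<in>set P. \<exists>c\<in>set S. a < c"
    then obtain a c where "a \<in> set P" "c \<in> set S" "a < c"
      by blast
    moreover have "c < M"
      using below \<open>c \<in> set S\<close> by simp
    moreover have "precedes (P @ M # S) a M" "precedes (P @ M # S) M c"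
      using \<open>a \<in> set P\<close> \<open>c \<in> set S\<close> by (auto simp: precedes_append precedes_Cons)
    ultimately show ?thesis
      using contains_132_iff[OF dist] by blast
  qed
qed

section \<open>Active sites of a 132-avoiding permutation\<close>

lemma length_eq_if_set_eq_atLeastAtMost: "distinct w \<Longrightarrow> set w = {1..k} \<Longrightarrow> length w = k"
  using distinct_card by fastforce

definition top_before_bottom :: "nat list \<Rightarrow> nat \<Rightarrow> nat \<Rightarrow> bool" where
  "top_before_bottom w k v \<longleftrightarrow> (\<forall>a\<in>{v<..k}. \<forall>b\<in>{1..v}. precedes w a b)"

lemma top_before_bottom_small:
  "v \<le> k \<Longrightarrow> top_before_bottom (small k x) k v \<longleftrightarrow> top_before_bottom x k v"
  by (simp add: top_before_bottom_def small_def precedes_filter)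

context
  fixes w :: "nat list" and k t :: nat
  assumes dist: "distinct w" and set_w: "set w = {1..k}" and t_le: "t \<le> k"
begin

lemma take_drop_partition:
  "set (take t w) \<inter> set (drop t w) = {}" "set (take t w) \<union> set (drop t w) = {1..k}"
  "card (set (take t w)) = t" "card (set (drop t w)) = k - t"
  using dist set_w t_le length_eq_if_set_eq_atLeastAtMost[OF dist set_w]
  by (auto simp: set_take_disj_set_drop_if_distinct distinct_card simp flip: set_append)

lemma take_eq_top_if_subset: "set (take t w) \<subseteq> {k - t<..k} \<Longrightarrow> set (take t w) = {k - t<..k}"
  using take_drop_partition(3) t_le by (simp add: card_subset_eq)

lemma prefix_above_suffix_iff_take_eq_top:
  "(\<forall>a\<in>set (take t w). \<forall>c\<in>set (drop t w). \<not> a < c) \<longleftrightarrow> set (take t w) = {k - t<..k}"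
  (is "?sep \<longleftrightarrow> ?P = ?top")
proof
  let ?S = "set (drop t w)"
  assume sep: ?sep
  have "?P \<subseteq> ?top"
  proof
    fix a assume a: "a \<in> ?P"
    show "a \<in> ?top"
    proof (rule ccontr)
      assume "a \<notin> ?top"
      with a take_drop_partition(2) have "1 \<le> a" "a \<le> k - t" by auto
      have "?S \<subseteq> {1..<a}"
        using sep a take_drop_partition(1,2) by fastforce
      then have "card ?S \<le> a - 1"
        by (metis card_atLeastLessThan card_mono finite_atLeastLessThan)
      with take_drop_partition(4) \<open>1 \<le> a\<close> \<open>a \<le> k - t\<close> show False by linarith
    qed
  qed
  then show "?P = ?top"
    by (rule take_eq_top_if_subset)
next
  assume "?P = ?top"
  show ?sep
  proof (intro ballI)
    fix a c assume "a \<in> ?P" "c \<in> set (drop t w)"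
    with take_drop_partition(1,2) \<open>?P = ?top\<close> have "a \<in> ?top" "c \<in> {1..k}" "c \<notin> ?top"
      by blast+
    then show "\<not> a < c" by auto
  qed
qed

lemma top_before_bottom_iff_take_eq_top:
  "top_before_bottom w k (k - t) \<longleftrightarrow> set (take t w) = {k - t<..k}"
  (is "_ \<longleftrightarrow> ?P = ?top")
proof -
  let ?S = "set (drop t w)"
  note parts = take_drop_partition
  have precedes_split: "precedes w a b \<longleftrightarrow> precedes (take t w) a b \<or> (a \<in> ?P \<and> b \<in> ?S) \<or> precedes (drop t w) a b"
    for a b
    by (metis append_take_drop_id precedes_append)
  show ?thesis
  proof
    assume top_first: "top_before_bottom w k (k - t)"
    have "?P \<subseteq> ?top"
    proof
      fix a assume a: "a \<in> ?P"
      show "a \<in> ?top"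
      proof (rule ccontr)
        assume "a \<notin> ?top"
        with a parts(2) have "1 \<le> a" "a \<le> k - t" by auto
        then have "?top \<subseteq> ?P"
          using top_first a parts(1) precedes_split
          by (fastforce simp: top_before_bottom_def dest: precedes_in_set)
        with a \<open>a \<notin> ?top\<close> have "card (insert a ?top) \<le> t"
          using parts(3) by (metis card_mono finite_set insert_subset)
        with \<open>a \<notin> ?top\<close> t_le show False by simp
      qed
    qed
    then show "?P = ?top"
      by (rule take_eq_top_if_subset)
  next
    assume "?P = ?top"
    moreover from this have "b \<in> ?S" if "b \<in> {1..k - t}" for b
    proof -
      from that have "b \<in> {1..k}" "b \<notin> ?top" by auto
      with parts(2) \<open>?P = ?top\<close> show ?thesis by (metis UnE)
    qed
    ultimately show "top_before_bottom w k (k - t)"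
      unfolding top_before_bottom_def precedes_split by blast
  qed
qed

end

lemma active_site_132_iff:
  assumes dist: "distinct w" and set_w: "set w = {1..k}" and avoid: "avoids w [1, 3, 2]"
    and i: "1 \<le> i" "i \<le> k + 1"
  shows "avoids (ins_max w i) [1, 3, 2] \<longleftrightarrow> top_before_bottom w k (k + 1 - i)"
proof -
  let ?P = "take (i - 1) w" and ?S = "drop (i - 1) w"
  have ins: "ins_max w i = ?P @ (k + 1) # ?S"
    by (simp add: ins_max_def length_eq_if_set_eq_atLeastAtMost[OF dist set_w])
  have dist_ins: "distinct (?P @ (k + 1) # ?S)"
    using dist set_w by (auto dest: in_set_takeD in_set_dropD simp: set_take_disj_set_drop_if_distinct)
  have "avoids (ins_max w i) [1, 3, 2] \<longleftrightarrow> \<not> (\<exists>a\<in>set ?P. \<exists>c\<in>set ?S. a < c)"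
    using contains_132_insert_max[OF dist_ins] avoid set_w unfolding avoids_def ins by auto
  also have "\<dots> \<longleftrightarrow> set ?P = {k - (i - 1)<..k}"
    using prefix_above_suffix_iff_take_eq_top[OF dist set_w, of "i - 1"] i by simp
  also have "\<dots> \<longleftrightarrow> top_before_bottom w k (k - (i - 1))"
    using top_before_bottom_iff_take_eq_top[OF dist set_w, of "i - 1"] i by simp
  also have "k - (i - 1) = k + 1 - i"
    using i by simp
  finally show ?thesis .
qed

lemma card_active_sites_132:
  assumes dist: "distinct w" and set_w: "set w = {1..k}" and avoid: "avoids w [1, 3, 2]"
  shows "card (active_sites w [1, 3, 2]) = card {v. v \<le> k \<and> top_before_bottom w k v}"
proof -
  have "active_sites w [1, 3, 2] = {i. 1 \<le> i \<and> i \<le> k + 1 \<and> top_before_bottom w k (k + 1 - i)}"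
    using active_site_132_iff[OF assms] length_eq_if_set_eq_atLeastAtMost[OF dist set_w]
    by (auto simp: active_sites_def)
  also have "\<dots> = (\<lambda>v. k + 1 - v) ` {v. v \<le> k \<and> top_before_bottom w k v}"
  proof (rule set_eqI, rule iffI)
    fix i assume "i \<in> {i. 1 \<le> i \<and> i \<le> k + 1 \<and> top_before_bottom w k (k + 1 - i)}"
    then show "i \<in> (\<lambda>v. k + 1 - v) ` {v. v \<le> k \<and> top_before_bottom w k v}"
      by (intro image_eqI[of _ _ "k + 1 - i"]) auto
  qed auto
  finally have "active_sites w [1, 3, 2] = (\<lambda>v. k + 1 - v) ` {v. v \<le> k \<and> top_before_bottom w k v}" .
  moreover have "inj_on (\<lambda>v. k + 1 - v) {v. v \<le> k \<and> top_before_bottom w k v}"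
    by (auto simp: inj_on_def)
  ultimately show ?thesis
    by (simp add: card_image)
qed

definition split_points :: "nat list \<Rightarrow> nat \<Rightarrow> nat set" where
  "split_points x k = {v. 1 \<le> v \<and> v < k \<and> top_before_bottom x k v}"

lemma finite_split_points [simp]: "finite (split_points x k)"
  unfolding split_points_def by (rule finite_subset[of _ "{..<k}"]) auto

lemma card_Act_132:
  assumes perm: "is_perm n x" and avoid: "avoids x [1, 3, 2]" and j: "1 \<le> j" "j \<le> n"
  shows "card (Act j x [1, 3, 2]) = card (split_points x (n + 1 - j)) + 2"
proof -
  define k where "k = n + 1 - j"
  have k: "1 \<le> k" "k \<le> n"
    using j by (auto simp: k_def)
  have "distinct (small k x)" "set (small k x) = {1..k}"
    using perm k by (auto simp: is_perm_def small_def)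
  moreover have "avoids (small k x) [1, 3, 2]"
    using avoid contains_subseq[of "small k x" x] by (auto simp: avoids_def small_def)
  ultimately have "card (Act j x [1, 3, 2]) = card {v. v \<le> k \<and> top_before_bottom (small k x) k v}"
    using card_active_sites_132 perm by (simp add: Act_def is_perm_def k_def)
  also have "{v. v \<le> k \<and> top_before_bottom (small k x) k v} = {v. v \<le> k \<and> top_before_bottom x k v}"
    using top_before_bottom_small by blast
  also have "{v. v \<le> k \<and> top_before_bottom x k v} = {0, k} \<union> split_points x k"
    using k by (auto simp: split_points_def top_before_bottom_def)
  also have "card \<dots> = card (split_points x k) + 2"
    using k by (simp add: card_Un_disjoint split_points_def)
  finally show ?thesis
    by (simp add: k_def)
qed

section \<open>Growth of the split points\<close>

lemma top_before_bottom_Suc: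
  "v \<le> m \<Longrightarrow> top_before_bottom x (Suc m) v \<longleftrightarrow>
    top_before_bottom x m v \<and> (\<forall>b\<in>{1..v}. precedes x (Suc m) b)"
  unfolding top_before_bottom_def by (auto simp: le_Suc_eq)

definition preceded_by_smaller :: "nat list \<Rightarrow> nat \<Rightarrow> bool" where
  "preceded_by_smaller x k \<longleftrightarrow> (\<exists>u. 1 \<le> u \<and> u < k \<and> precedes x u k)"

locale perm_avoiding_132 =
  fixes n :: nat and x :: "nat list"
  assumes perm: "is_perm n x" and avoid: "avoids x [1, 3, 2]"
begin

lemma distinct: "distinct x" and set_x: "set x = {1..n}" and length_x: "length x = n"
  using perm by (auto simp: is_perm_def)

lemma no_132: "precedes x a b \<Longrightarrow> precedes x b c \<Longrightarrow> a < c \<Longrightarrow> c < b \<Longrightarrow> False"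
  using avoid contains_132_iff[OF distinct] by (auto simp: avoids_def)

lemma precedes_cases:
  "a \<in> {1..n} \<Longrightarrow> b \<in> {1..n} \<Longrightarrow> a \<noteq> b \<Longrightarrow> precedes x a b \<or> precedes x b a"
  using precedes_total[of a x b] set_x by simp

lemma split_points_Suc_eq_insert:
  assumes "1 \<le> m" "Suc m \<le> n" and not_preceded: "\<not> preceded_by_smaller x (Suc m)"
  shows "split_points x (Suc m) = insert m (split_points x m)"
proof -
  have "precedes x (Suc m) b" if "b \<in> {1..m}" for b
    using precedes_cases[of b "Suc m"] that \<open>Suc m \<le> n\<close> not_preceded
    by (auto simp: preceded_by_smaller_def)
  moreover have "top_before_bottom x m m"
    by (simp add: top_before_bottom_def)
  ultimately show ?thesis
    using top_before_bottom_Suc[of _ m x] \<open>1 \<le> m\<close> by (auto simp: split_points_def)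
qed

lemma card_split_points_Suc:
  assumes "1 \<le> m" "Suc m \<le> n" "\<not> preceded_by_smaller x (Suc m)"
  shows "card (split_points x (Suc m)) = card (split_points x m) + 1"
proof -
  have "m \<notin> split_points x m"
    by (simp add: split_points_def)
  then show ?thesis
    using split_points_Suc_eq_insert[OF assms] by simp
qed

lemma split_points_Suc_subset:
  assumes "preceded_by_smaller x (Suc m)"
  shows "split_points x (Suc m) \<subseteq> split_points x m"
proof
  fix v assume v: "v \<in> split_points x (Suc m)"
  obtain u where u: "1 \<le> u" "u < Suc m" "precedes x u (Suc m)"
    using assms by (auto simp: preceded_by_smaller_def)
  have "v \<noteq> m"
    using v u precedes_asym[OF distinct] by (auto simp: split_points_def top_before_bottom_def)
  then show "v \<in> split_points x m"
    using v top_before_bottom_Suc[of v m x] by (auto simp: split_points_def)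
qed

lemma split_points_subset_Suc_if_adjacent:
  assumes "Suc b < n" "x ! b = m" "x ! Suc b = Suc m"
  shows "split_points x m \<subseteq> split_points x (Suc m)"
proof
  fix v assume v: "v \<in> split_points x m"
  have "precedes x (Suc m) c" if c: "c \<in> {1..v}" for c
  proof -
    have "precedes x m c"
      using v c by (auto simp: split_points_def top_before_bottom_def)
    then obtain q where q: "b < q" "q < n" "x ! q = c"
      using precedes_nth_iff(1)[OF distinct, of b c] assms length_x by auto
    have "q \<noteq> Suc b"
      using q c v assms(3) by (auto simp: split_points_def)
    with q assms show ?thesis
      unfolding precedes_def by (intro exI[of _ "Suc b"] exI[of _ q]) (simp add: length_x)
  qed
  then show "v \<in> split_points x (Suc m)"
    using v top_before_bottom_Suc[of v m x] by (auto simp: split_points_def)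
qed

lemma precedes_Suc_if_preceded_by_smaller:
  assumes "1 \<le> m" "Suc m \<le> n" "preceded_by_smaller x (Suc m)"
  shows "precedes x m (Suc m)"
proof -
  obtain u where u: "1 \<le> u" "u < Suc m" "precedes x u (Suc m)"
    using assms(3) by (auto simp: preceded_by_smaller_def)
  show ?thesis
  proof (rule ccontr)
    assume "\<not> precedes x m (Suc m)"
    then have "precedes x (Suc m) m" "u \<noteq> m"
      using precedes_cases[of m "Suc m"] assms u by auto
    then show False
      using no_132[OF u(3), of m] u by simp
  qed
qed

lemma exists_split_point_above:
  assumes y: "1 \<le> y" "y < m" and "m \<le> n" and m_y: "precedes x m y"
  shows "\<exists>v\<in>split_points x m. y \<le> v"
proof -
  define T where "T = {z \<in> {1..<m}. precedes x m z}"
  define v where "v = Max T"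
  have "finite T" "y \<in> T"
    using y m_y by (auto simp: T_def)
  then have "v \<in> T" "y \<le> v"
    unfolding v_def using Max_in Max_ge by blast+
  then have v: "1 \<le> v" "v < m" "precedes x m v"
    by (auto simp: T_def)
  have m_first: "precedes x m b" if "b \<in> {1..v}" for b
  proof (rule ccontr)
    assume "\<not> precedes x m b"
    with v(3) that have "b < v"
      by (cases "b = v") auto
    moreover have "precedes x b m"
      using precedes_cases[of b m] \<open>\<not> precedes x m b\<close> that v \<open>m \<le> n\<close> by auto
    ultimately show False
      using no_132[of b m v] v by blast
  qed
  have "precedes x a b" if "a \<in> {v<..m}" "b \<in> {1..v}" for a b
  proof (cases "a = m")
    case False
    have "a \<notin> T"
    proof
      assume "a \<in> T"
      then have "a \<le> v"
        using \<open>finite T\<close> by (simp add: v_def)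
      with that(1) show False by simp
    qed
    then have "precedes x a m"
      using precedes_cases[of a m] that False \<open>m \<le> n\<close> v by (auto simp: T_def)
    then show ?thesis
      using m_first[OF that(2)] precedes_trans[OF distinct] by blast
  qed (use m_first that in simp)
  then have "v \<in> split_points x m"
    using v by (auto simp: split_points_def top_before_bottom_def)
  with \<open>y \<le> v\<close> show ?thesis by blast
qed

lemma adjacent_if_split_points_subset:
  assumes pq: "p < q" "q < n" "x ! p = m" "x ! q = Suc m"
    and sub: "split_points x m \<subseteq> split_points x (Suc m)"
  shows "q = Suc p"
proof (rule ccontr)
  assume "q \<noteq> Suc p"
  define y where "y = x ! Suc p"
  have "Suc p < q"
    using pq \<open>q \<noteq> Suc p\<close> by simp
  then have y: "y \<in> {1..n}" "y \<noteq> m" "y \<noteq> Suc m"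
    using pq set_x length_x nth_mem[of "Suc p" x]
      nth_eq_iff_index_eq[OF distinct, of "Suc p" p] nth_eq_iff_index_eq[OF distinct, of "Suc p" q]
    by (auto simp: y_def)
  have "precedes x m y"
    unfolding precedes_def y_def using pq \<open>Suc p < q\<close>
    by (intro exI[of _ p] exI[of _ "Suc p"]) (simp add: length_x)
  have "precedes x y (Suc m)"
    unfolding precedes_def y_def using pq \<open>Suc p < q\<close>
    by (intro exI[of _ "Suc p"] exI[of _ q]) (simp add: length_x)
  show False
  proof (cases "Suc m < y")
    case True
    then show False
      using no_132[OF \<open>precedes x m y\<close> \<open>precedes x y (Suc m)\<close>] by simp
  next
    case False
    then have "y < m"
      using y by simp
    moreover have "m \<le> n"
      using pq set_x length_x by (metis atLeastAtMost_iff nth_mem order.strict_trans)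
    ultimately obtain v where "v \<in> split_points x m" "y \<le> v"
      using exists_split_point_above y \<open>precedes x m y\<close> by auto
    then have "v \<in> split_points x (Suc m)"
      using sub by blast
    then have "precedes x (Suc m) y"
      using y \<open>y \<le> v\<close> by (auto simp: split_points_def top_before_bottom_def)
    then show False
      using \<open>precedes x y (Suc m)\<close> precedes_asym[OF distinct] by blast
  qed
qed

lemma contains_123star_if_split_points_plateau:
  assumes "1 \<le> m" "m + 2 \<le> n"
    and eq: "card (split_points x (m + 2)) = card (split_points x (m + 1))"
    and le: "card (split_points x (m + 1)) \<le> card (split_points x m)"
  shows "contains_123star x"
proof -
  have before_top: "preceded_by_smaller x (Suc (Suc m))"
    using card_split_points_Suc[of "Suc m"] assms by force
  have before_mid: "preceded_by_smaller x (Suc m)"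
    using card_split_points_Suc[of m] assms by force
  have "split_points x (Suc (Suc m)) = split_points x (Suc m)"
    using split_points_Suc_subset[OF before_top] eq by (simp add: card_subset_eq)
  then have sub: "split_points x (Suc m) \<subseteq> split_points x (Suc (Suc m))"
    by simp
  obtain p q where pq: "p < q" "q < n" "x ! p = Suc m" "x ! q = Suc (Suc m)"
    using precedes_Suc_if_preceded_by_smaller[OF _ _ before_top] assms
    by (auto simp: precedes_def length_x)
  have "q = Suc p"
    using adjacent_if_split_points_subset[OF pq sub] .
  obtain u where u: "1 \<le> u" "u < Suc m" "precedes x u (Suc m)"
    using before_mid by (auto simp: preceded_by_smaller_def)
  then obtain a where "a < p" "x ! a = u"
    using precedes_nth_iff(2)[OF distinct, of p u] pq length_x by auto
  then show ?thesis
    unfolding contains_123star_def using pq \<open>q = Suc p\<close> u length_x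
    by (intro exI[of _ a] exI[of _ p]) auto
qed

lemma split_points_plateau_if_contains_123star:
  assumes "contains_123star x"
  shows "\<exists>m. 1 \<le> m \<and> m + 2 \<le> n \<and>
    card (split_points x (m + 2)) = card (split_points x (m + 1)) \<and>
    card (split_points x (m + 1)) \<le> card (split_points x m)"
proof -
  obtain a b where ab: "a < b" "Suc b < n" "x ! a < x ! b" "x ! Suc b = Suc (x ! b)"
    using assms by (auto simp: contains_123star_def length_x)
  define m where "m = x ! b - 1"
  have "x ! a \<in> {1..n}" "x ! Suc b \<in> {1..n}"
    using ab set_x length_x nth_mem[of a x] nth_mem[of "Suc b" x] by auto
  then have m: "1 \<le> m" "m + 2 \<le> n" "x ! b = Suc m"
    using ab by (auto simp: m_def)
  have "precedes x (x ! a) (Suc m)" "precedes x (Suc m) (Suc (Suc m))"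
    unfolding precedes_def using ab m length_x by force+
  then have "preceded_by_smaller x (Suc m)" "preceded_by_smaller x (Suc (Suc m))"
    using ab m \<open>x ! a \<in> {1..n}\<close> by (auto simp: preceded_by_smaller_def)
  then have "split_points x (Suc (Suc m)) = split_points x (Suc m)"
    "split_points x (Suc m) \<subseteq> split_points x m"
    using split_points_Suc_subset split_points_subset_Suc_if_adjacent[of b "Suc m"] ab m
    by (auto intro: subset_antisym)
  then show ?thesis
    using m by (intro exI[of _ m]) (simp add: card_mono)
qed

lemma split_points_plateau_iff_contains_123star:
  "(\<exists>m. 1 \<le> m \<and> m + 2 \<le> n \<and>
      card (split_points x (m + 2)) = card (split_points x (m + 1)) \<and>
      card (split_points x (m + 1)) \<le> card (split_points x m))
    \<longleftrightarrow> contains_123star x"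
  using contains_123star_if_split_points_plateau split_points_plateau_if_contains_123star
  by blast

lemma Act_plateau_iff_split_points_plateau:
  "(\<exists>i. 1 \<le> i \<and> i \<le> n - 2 \<and>
      card (Act i x [1, 3, 2]) = card (Act (i + 1) x [1, 3, 2]) \<and>
      card (Act (i + 1) x [1, 3, 2]) \<le> card (Act (i + 2) x [1, 3, 2]))
    \<longleftrightarrow> (\<exists>m. 1 \<le> m \<and> m + 2 \<le> n \<and>
      card (split_points x (m + 2)) = card (split_points x (m + 1)) \<and>
      card (split_points x (m + 1)) \<le> card (split_points x m))"
    (is "(\<exists>i. ?Act_plateau i) \<longleftrightarrow> (\<exists>m. ?sp_plateau m)")
proof -
  have Act: "card (Act (n - 1 - m + d) x [1, 3, 2]) = card (split_points x (m + 2 - d)) + 2"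
    if "1 \<le> m" "m + 2 \<le> n" "d \<le> 2" for m d
  proof -
    have "n + 1 - (n - 1 - m + d) = m + 2 - d"
      using that by linarith
    then show ?thesis
      using card_Act_132[OF perm avoid, of "n - 1 - m + d"] that by simp
  qed
  have "?Act_plateau i \<longleftrightarrow> ?sp_plateau (n - 1 - i)" if "1 \<le> i" "i \<le> n - 2" for i
  proof -
    have m: "1 \<le> n - 1 - i" "n - 1 - i + 2 \<le> n" "n - 1 - (n - 1 - i) = i"
      using that by linarith+
    show ?thesis
      using Act[OF m(1,2), of 0] Act[OF m(1,2), of 1] Act[OF m(1,2), of 2] m(3) that by auto
  qed
  moreover have "1 \<le> n - 1 - m \<and> n - 1 - m \<le> n - 2 \<and> n - 1 - (n - 1 - m) = m"
    if "1 \<le> m" "m + 2 \<le> n" for m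
    using that by linarith
  ultimately show ?thesis
    by metis
qed

end

theorem theorem3p17:
  fixes n :: nat and x :: "nat list"
  assumes "n \<ge> 3" and "is_perm n x" and "avoids x [1, 3, 2]"
  shows "(\<exists>i. 1 \<le> i \<and> i \<le> n - 2 \<and>
            card (Act i x [1, 3, 2]) = card (Act (i + 1) x [1, 3, 2]) \<and>
            card (Act (i + 1) x [1, 3, 2]) \<le> card (Act (i + 2) x [1, 3, 2]))
         \<longleftrightarrow> contains_123star x"
proof -
  interpret perm_avoiding_132 n x
    using assms(2,3) by unfold_locales
  show ?thesis
    using Act_plateau_iff_split_points_plateau split_points_plateau_iff_contains_123star by simp
qed

end
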